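(* Let $((A,\cdot),N)$ be a Nijenhuis algebra, $((M,\triangleright,\triangleleft),N_M)$ a Nijenhuis bimodule, and $0\to((M,0),N_M)\xrightarrow{i}((E,\cdot_E),N_E)\xrightarrow{p}((A,\cdot),N)\to0$ an abelian extension whose induced Nijenhuis bimodule structure on $M$ is the given one. Fix a linear section $s$ of $p$ and let $(\chi,F)$ be the associated 2-cocycle. Then a pair $(\beta,\alpha)\in\mathrm{Aut}(M,N_M)\times\mathrm{Aut}(A,N)$ is inducible if and only if: (I) $\beta(a\triangleright u)=\alpha(a)\triangleright\beta(u)$ and $\beta(u\triangleleft a)=\beta(u)\triangleleft\alpha(a)$ for all $a\in A$, $u\in M$; and (II) there exists a linear map $\lambda:A\to M$ with $\beta(\chi(a,b))-\chi(\alpha(a),\alpha(b))=\alpha(a)\triangleright\lambda(b)+\lambda(a)\triangleleft\alpha(b)-\lambda(a\cdot b)$ and $\beta(F(a))-F(\alpha(a))=N_M(\lambda(a))-\lambda(N(a))$ for all $a,b\in A$.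
   Context: Over a field of characteristic $0$. Nijenhuis algebra: associative $(A,\cdot)$ with linear $N$, $N(a)N(b)=N(N(a)b+aN(b)-N(ab))$; homomorphisms are algebra maps commuting with the operators. Nijenhuis bimodule: $A$-bimodule with linear $N_M$ such that $N(a)\triangleright N_M(u)=N_M(N(a)\triangleright u+a\triangleright N_M(u)-N_M(a\triangleright u))$ and $N_M(u)\triangleleft N(a)=N_M(N_M(u)\triangleleft a+u\triangleleft N(a)-N_M(u\triangleleft a))$. An abelian extension is a Nijenhuis algebra $((E,\cdot_E),N_E)$ with a short exact sequence of Nijenhuis algebra homomorphisms as displayed, $M$ having zero multiplication; identify $M$ with $i(M)$. Its induced bimodule structure is $a\triangleright u=s(a)\cdot_Eu$, $u\triangleleft a=u\cdot_Es(a)$ for any section $s$. For the section $s$, $\chi(a,b)=s(a)\cdot_Es(b)-s(a\cdot b)\in M$ and $F(a)=N_E(s(a))-s(N(a))\in M$. $\mathrm{Aut}(A,N)$: algebra automorphisms of $A$ commuting with $N$; $\mathrm{Aut}(M,N_M)$: linear bijections $\beta:M\to M$ with $\beta N_M=N_M\beta$; $\mathrm{Aut}_M(E,N_E)$: Nijenhuis algebra automorphisms $\varphi$ of $E$ with $\varphi(M)\subseteq M$. For such $\varphi$, $\tau(\varphi)=(\varphi|_M,\ p\varphi s)\in\mathrm{Aut}(M,N_M)\times\mathrm{Aut}(A,N)$ (independent of $s$). A pair $(\beta,\alpha)$ is inducible if $(\beta,\alpha)=\tau(\varphi)$ for some $\varphi\in\mathrm{Aut}_M(E,N_E)$. *)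

theory Defs
  imports Complex_Main
begin

definition bilin ::
  "('k::field \<Rightarrow> 'a::ab_group_add \<Rightarrow> 'a) \<Rightarrow> ('k \<Rightarrow> 'b::ab_group_add \<Rightarrow> 'b)
   \<Rightarrow> ('k \<Rightarrow> 'c::ab_group_add \<Rightarrow> 'c) \<Rightarrow> ('a \<Rightarrow> 'b \<Rightarrow> 'c) \<Rightarrow> bool" where
  "bilin sa sb sc f \<longleftrightarrow>
     (\<forall>x. Vector_Spaces.linear sb sc (f x)) \<and> (\<forall>y. Vector_Spaces.linear sa sc (\<lambda>x. f x y))"

definition assoc_algebra :: "('k::field \<Rightarrow> 'a::ab_group_add \<Rightarrow> 'a) \<Rightarrow> ('a \<Rightarrow> 'a \<Rightarrow> 'a) \<Rightarrow> bool" where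
  "assoc_algebra sA mul \<longleftrightarrow> vector_space sA \<and> bilin sA sA sA mul \<and>
     (\<forall>x y z. mul (mul x y) z = mul x (mul y z))"

definition nijenhuis_algebra ::
  "('k::field \<Rightarrow> 'a::ab_group_add \<Rightarrow> 'a) \<Rightarrow> ('a \<Rightarrow> 'a \<Rightarrow> 'a) \<Rightarrow> ('a \<Rightarrow> 'a) \<Rightarrow> bool" where
  "nijenhuis_algebra sA mul N \<longleftrightarrow> assoc_algebra sA mul \<and> Vector_Spaces.linear sA sA N \<and>
     (\<forall>a b. mul (N a) (N b) = N (mul (N a) b + mul a (N b) - N (mul a b)))"

text \<open>A-bimodule with left action l (a |> u) and right action r (u <| a).\<close>
definition bimodule ::
  "('k::field \<Rightarrow> 'a::ab_group_add \<Rightarrow> 'a) \<Rightarrow> ('a \<Rightarrow> 'a \<Rightarrow> 'a) \<Rightarrow>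
   ('k \<Rightarrow> 'm::ab_group_add \<Rightarrow> 'm) \<Rightarrow> ('a \<Rightarrow> 'm \<Rightarrow> 'm) \<Rightarrow> ('m \<Rightarrow> 'a \<Rightarrow> 'm) \<Rightarrow> bool" where
  "bimodule sA mulA sM l r \<longleftrightarrow> assoc_algebra sA mulA \<and> vector_space sM \<and>
     bilin sA sM sM l \<and> bilin sM sA sM r \<and>
     (\<forall>a b u. l (mulA a b) u = l a (l b u)) \<and>
     (\<forall>a b u. r u (mulA a b) = r (r u a) b) \<and>
     (\<forall>a b u. r (l a u) b = l a (r u b))"

definition nijenhuis_bimodule ::
  "('k::field \<Rightarrow> 'a::ab_group_add \<Rightarrow> 'a) \<Rightarrow> ('a \<Rightarrow> 'a \<Rightarrow> 'a) \<Rightarrow> ('a \<Rightarrow> 'a) \<Rightarrow>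
   ('k \<Rightarrow> 'm::ab_group_add \<Rightarrow> 'm) \<Rightarrow> ('a \<Rightarrow> 'm \<Rightarrow> 'm) \<Rightarrow> ('m \<Rightarrow> 'a \<Rightarrow> 'm) \<Rightarrow> ('m \<Rightarrow> 'm) \<Rightarrow> bool" where
  "nijenhuis_bimodule sA mulA N sM l r NM \<longleftrightarrow>
     nijenhuis_algebra sA mulA N \<and> bimodule sA mulA sM l r \<and> Vector_Spaces.linear sM sM NM \<and>
     (\<forall>a u. l (N a) (NM u) = NM (l (N a) u + l a (NM u) - NM (l a u))) \<and>
     (\<forall>a u. r (NM u) (N a) = NM (r (NM u) a + r u (N a) - NM (r u a)))"

definition nij_alg_hom ::
  "('k::field \<Rightarrow> 'a::ab_group_add \<Rightarrow> 'a) \<Rightarrow> ('a \<Rightarrow> 'a \<Rightarrow> 'a) \<Rightarrow> ('a \<Rightarrow> 'a) \<Rightarrow>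
   ('k \<Rightarrow> 'b::ab_group_add \<Rightarrow> 'b) \<Rightarrow> ('b \<Rightarrow> 'b \<Rightarrow> 'b) \<Rightarrow> ('b \<Rightarrow> 'b) \<Rightarrow> ('a \<Rightarrow> 'b) \<Rightarrow> bool" where
  "nij_alg_hom sA mulA NA sB mulB NB f \<longleftrightarrow> Vector_Spaces.linear sA sB f \<and>
     (\<forall>x y. f (mulA x y) = mulB (f x) (f y)) \<and> (\<forall>x. f (NA x) = NB (f x))"

definition abelian_extension ::
  "('k::field \<Rightarrow> 'a::ab_group_add \<Rightarrow> 'a) \<Rightarrow> ('a \<Rightarrow> 'a \<Rightarrow> 'a) \<Rightarrow> ('a \<Rightarrow> 'a) \<Rightarrow>
   ('k \<Rightarrow> 'm::ab_group_add \<Rightarrow> 'm) \<Rightarrow> ('m \<Rightarrow> 'm) \<Rightarrow>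
   ('k \<Rightarrow> 'e::ab_group_add \<Rightarrow> 'e) \<Rightarrow> ('e \<Rightarrow> 'e \<Rightarrow> 'e) \<Rightarrow> ('e \<Rightarrow> 'e) \<Rightarrow>
   ('m \<Rightarrow> 'e) \<Rightarrow> ('e \<Rightarrow> 'a) \<Rightarrow> bool" where
  "abelian_extension sA mulA N sM NM sE mulE NE i p \<longleftrightarrow>
     nijenhuis_algebra sA mulA N \<and>
     nijenhuis_algebra sM (\<lambda>_ _. 0) NM \<and>
     nijenhuis_algebra sE mulE NE \<and>
     nij_alg_hom sM (\<lambda>_ _. 0) NM sE mulE NE i \<and>
     nij_alg_hom sE mulE NE sA mulA N p \<and>
     inj i \<and> surj p \<and> range i = {x. p x = 0}"

definition linear_section ::
  "('k::field \<Rightarrow> 'a::ab_group_add \<Rightarrow> 'a) \<Rightarrow> ('k \<Rightarrow> 'e::ab_group_add \<Rightarrow> 'e) \<Rightarrow>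
   ('e \<Rightarrow> 'a) \<Rightarrow> ('a \<Rightarrow> 'e) \<Rightarrow> bool" where
  "linear_section sA sE p s \<longleftrightarrow> Vector_Spaces.linear sA sE s \<and> (\<forall>a. p (s a) = a)"

definition nij_alg_aut ::
  "('k::field \<Rightarrow> 'a::ab_group_add \<Rightarrow> 'a) \<Rightarrow> ('a \<Rightarrow> 'a \<Rightarrow> 'a) \<Rightarrow> ('a \<Rightarrow> 'a) \<Rightarrow> ('a \<Rightarrow> 'a) \<Rightarrow> bool" where
  "nij_alg_aut sA mul N f \<longleftrightarrow> nij_alg_hom sA mul N sA mul N f \<and> bij f"

definition nij_mod_aut ::
  "('k::field \<Rightarrow> 'm::ab_group_add \<Rightarrow> 'm) \<Rightarrow> ('m \<Rightarrow> 'm) \<Rightarrow> ('m \<Rightarrow> 'm) \<Rightarrow> bool" where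
  "nij_mod_aut sM NM b \<longleftrightarrow> Vector_Spaces.linear sM sM b \<and> bij b \<and> (\<forall>u. b (NM u) = NM (b u))"

text \<open>(beta, alpha) is inducible: there is phi in Aut_M(E,N_E) with tau(phi) = (beta, alpha),
  where phi restricted to M (identified with i(M)) is beta, and p phi s = alpha.\<close>
definition inducible ::
  "('k::field \<Rightarrow> 'e::ab_group_add \<Rightarrow> 'e) \<Rightarrow> ('e \<Rightarrow> 'e \<Rightarrow> 'e) \<Rightarrow> ('e \<Rightarrow> 'e) \<Rightarrow>
   ('m \<Rightarrow> 'e) \<Rightarrow> ('e \<Rightarrow> 'a) \<Rightarrow> ('a \<Rightarrow> 'e) \<Rightarrow> ('m \<Rightarrow> 'm) \<Rightarrow> ('a \<Rightarrow> 'a) \<Rightarrow> bool" where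
  "inducible sE mulE NE i p s b a \<longleftrightarrow>
     (\<exists>\<phi>. nij_alg_aut sE mulE NE \<phi> \<and> \<phi> ` range i \<subseteq> range i \<and>
          (\<forall>u. \<phi> (i u) = i (b u)) \<and> (\<forall>x. p (\<phi> (s x)) = a x))"

end

(*
  Every element of E is uniquely s a + i u, and in these coordinates
  (a, u) (b, v) = (a b, \<chi> a b + a |> v + u <| b) and N_E (a, u) = (N a, F a + N_M u).
  A linear map \<phi> of E with \<phi> (i u) = i (\<beta> u) and p (\<phi> (s a)) = \<alpha> a is necessarily
  (a, u) \<mapsto> (\<alpha> a, \<lambda> a + \<beta> u) for a linear \<lambda> : A \<rightarrow> M, and conversely every such map is
  linear and bijective.  Comparing M-components of \<phi> (x y) with \<phi> x \<phi> y, and of \<phi> (N_E x)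
  with N_E (\<phi> x), shows that \<phi> is a Nijenhuis algebra automorphism exactly when (I) holds and
  \<lambda> satisfies the two identities of (II).
*)

theory Submission
  imports Defs
begin

lemma bilin_add_left: "bilin sa sb sc f \<Longrightarrow> f (x + y) z = f x z + f y z"
  by (simp add: bilin_def Vector_Spaces.linear_iff)

lemma bilin_add_right: "bilin sa sb sc f \<Longrightarrow> f x (y + z) = f x y + f x z"
  by (simp add: bilin_def Vector_Spaces.linear_iff)

lemma bilin_zero_left: "bilin sa sb sc f \<Longrightarrow> f 0 y = 0"
  using bilin_add_left[of sa sb sc f 0 0 y] by simp

lemma bilin_zero_right: "bilin sa sb sc f \<Longrightarrow> f x 0 = 0"
  using bilin_add_right[of sa sb sc f x 0 0] by simp

locale abelian_extension_with_section =
  fixes sA :: "'k::field \<Rightarrow> 'a::ab_group_add \<Rightarrow> 'a"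
    and mulA :: "'a \<Rightarrow> 'a \<Rightarrow> 'a" and N :: "'a \<Rightarrow> 'a"
    and sM :: "'k \<Rightarrow> 'm::ab_group_add \<Rightarrow> 'm"
    and l :: "'a \<Rightarrow> 'm \<Rightarrow> 'm" and r :: "'m \<Rightarrow> 'a \<Rightarrow> 'm" and NM :: "'m \<Rightarrow> 'm"
    and sE :: "'k \<Rightarrow> 'e::ab_group_add \<Rightarrow> 'e"
    and mulE :: "'e \<Rightarrow> 'e \<Rightarrow> 'e" and NE :: "'e \<Rightarrow> 'e"
    and i :: "'m \<Rightarrow> 'e" and p :: "'e \<Rightarrow> 'a" and s :: "'a \<Rightarrow> 'e"
    and \<chi> :: "'a \<Rightarrow> 'a \<Rightarrow> 'm" and F :: "'a \<Rightarrow> 'm"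
  assumes bimod: "nijenhuis_bimodule sA mulA N sM l r NM"
    and ext: "abelian_extension sA mulA N sM NM sE mulE NE i p"
    and induced_l: "\<And>a u. i (l a u) = mulE (s a) (i u)"
    and induced_r: "\<And>a u. i (r u a) = mulE (i u) (s a)"
    and sec: "linear_section sA sE p s"
    and chi_def: "\<And>a b. i (\<chi> a b) = mulE (s a) (s b) - s (mulA a b)"
    and F_def: "\<And>a. i (F a) = NE (s a) - s (N a)"
begin

lemma bilin_mulA: "bilin sA sA sA mulA"
  using ext by (simp add: abelian_extension_def nijenhuis_algebra_def assoc_algebra_def)

lemma bilin_mulE: "bilin sE sE sE mulE"
  using ext by (simp add: abelian_extension_def nijenhuis_algebra_def assoc_algebra_def)

lemma bilin_l: "bilin sA sM sM l"
  using bimod by (simp add: nijenhuis_bimodule_def bimodule_def)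

lemma bilin_r: "bilin sM sA sM r"
  using bimod by (simp add: nijenhuis_bimodule_def bimodule_def)

sublocale s: Vector_Spaces.linear sA sE s
  using sec by (simp add: linear_section_def)

sublocale i: Vector_Spaces.linear sM sE i
  using ext by (simp add: abelian_extension_def nij_alg_hom_def)

sublocale p: Vector_Spaces.linear sE sA p
  using ext by (simp add: abelian_extension_def nij_alg_hom_def)

sublocale NE: Vector_Spaces.linear sE sE NE
  using ext by (simp add: abelian_extension_def nijenhuis_algebra_def)

sublocale NM: Vector_Spaces.linear sM sM NM
  using bimod by (simp add: nijenhuis_bimodule_def)

lemma inj_i: "inj i"
  using ext by (simp add: abelian_extension_def)

lemma range_i: "range i = {x. p x = 0}"
  using ext by (simp add: abelian_extension_def)

lemma p_s [simp]: "p (s a) = a"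
  using sec by (simp add: linear_section_def)

lemma p_i [simp]: "p (i u) = 0"
  using range_i by auto

lemma mulE_i_i: "mulE (i u) (i v) = 0"
  using ext i.zero by (simp add: abelian_extension_def nij_alg_hom_def)

lemma NE_i: "NE (i u) = i (NM u)"
  using ext by (simp add: abelian_extension_def nij_alg_hom_def)

lemma chi_zero_left [simp]: "\<chi> 0 b = 0"
  using chi_def[of 0 b] bilin_zero_left[OF bilin_mulE] bilin_zero_left[OF bilin_mulA]
  by (simp add: inj_eq[OF inj_i, of _ 0, symmetric])

lemma chi_zero_right [simp]: "\<chi> a 0 = 0"
  using chi_def[of a 0] bilin_zero_right[OF bilin_mulE] bilin_zero_right[OF bilin_mulA]
  by (simp add: inj_eq[OF inj_i, of _ 0, symmetric])

lemma section_decomposition: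
  obtains a u where "e = s a + i u"
proof -
  have "e - s (p e) \<in> range i"
    using range_i by (simp add: p.diff)
  then obtain u where "e - s (p e) = i u" by blast
  then have "e = s (p e) + i u" by (simp add: algebra_simps)
  then show thesis by (rule that)
qed

lemma section_decomposition_eq_iff: "s a + i u = s b + i v \<longleftrightarrow> a = b \<and> u = v"
proof
  assume eq: "s a + i u = s b + i v"
  have "a = p (s a + i u)" "b = p (s b + i v)"
    by (simp_all add: p.add)
  with eq have "a = b" by simp
  with eq show "a = b \<and> u = v"
    by (simp add: inj_eq[OF inj_i])
qed simp

lemma mulE_coordinates:
  "mulE (s a + i u) (s b + i v) = s (mulA a b) + i (\<chi> a b + l a v + r u b)"
  by (simp add: bilin_add_left[OF bilin_mulE] bilin_add_right[OF bilin_mulE] mulE_i_i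
      induced_l induced_r chi_def i.add)

lemma NE_coordinates: "NE (s a + i u) = s (N a) + i (F a + NM u)"
  by (simp add: NE.add NE_i F_def i.add)

definition coordinate_map :: "('a \<Rightarrow> 'a) \<Rightarrow> ('m \<Rightarrow> 'm) \<Rightarrow> ('a \<Rightarrow> 'm) \<Rightarrow> 'e \<Rightarrow> 'e" where
  "coordinate_map \<alpha> \<beta> lam e = s (\<alpha> (p e)) + i (lam (p e) + \<beta> (inv i (e - s (p e))))"

lemma coordinate_map_coordinates:
  "coordinate_map \<alpha> \<beta> lam (s a + i u) = s (\<alpha> a) + i (lam a + \<beta> u)"
  by (simp add: coordinate_map_def p.add inv_f_f[OF inj_i])

lemma coordinate_map_linear:
  assumes "Vector_Spaces.linear sA sA \<alpha>" "Vector_Spaces.linear sM sM \<beta>"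
    and "Vector_Spaces.linear sA sM lam"
  shows "Vector_Spaces.linear sE sE (coordinate_map \<alpha> \<beta> lam)"
proof -
  interpret \<alpha>: Vector_Spaces.linear sA sA \<alpha> by fact
  interpret \<beta>: Vector_Spaces.linear sM sM \<beta> by fact
  interpret lam: Vector_Spaces.linear sA sM lam by fact
  have "coordinate_map \<alpha> \<beta> lam (x + y) = coordinate_map \<alpha> \<beta> lam x + coordinate_map \<alpha> \<beta> lam y"
    for x y
  proof -
    obtain a u b v where x: "x = s a + i u" and y: "y = s b + i v"
      by (metis section_decomposition)
    have "x + y = s (a + b) + i (u + v)"
      by (simp add: x y s.add i.add)
    then have "coordinate_map \<alpha> \<beta> lam (x + y) = s (\<alpha> (a + b)) + i (lam (a + b) + \<beta> (u + v))"
      by (simp only: coordinate_map_coordinates)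
    then show ?thesis
      by (simp add: x y coordinate_map_coordinates \<alpha>.add \<beta>.add lam.add s.add i.add)
  qed
  moreover have "coordinate_map \<alpha> \<beta> lam (sE c x) = sE c (coordinate_map \<alpha> \<beta> lam x)" for c x
  proof -
    obtain a u where x: "x = s a + i u"
      by (rule section_decomposition)
    have "sE c x = s (sA c a) + i (sM c u)"
      by (simp add: x s.scale i.scale s.vs2.scale_right_distrib)
    then have "coordinate_map \<alpha> \<beta> lam (sE c x) = s (\<alpha> (sA c a)) + i (lam (sA c a) + \<beta> (sM c u))"
      by (simp only: coordinate_map_coordinates)
    then show ?thesis
      by (simp add: x coordinate_map_coordinates \<alpha>.scale \<beta>.scale lam.scale s.scale i.scale
          i.add s.vs2.scale_right_distrib i.vs1.scale_right_distrib)
  qed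
  ultimately show ?thesis
    by (simp add: Vector_Spaces.linear_iff s.vs2.vector_space_axioms)
qed

lemma coordinate_map_bij:
  assumes "bij \<alpha>" "bij \<beta>"
  shows "bij (coordinate_map \<alpha> \<beta> lam)"
proof (rule bijI)
  show "inj (coordinate_map \<alpha> \<beta> lam)"
  proof (rule injI)
    fix x y
    assume eq: "coordinate_map \<alpha> \<beta> lam x = coordinate_map \<alpha> \<beta> lam y"
    obtain a u b v where x: "x = s a + i u" and y: "y = s b + i v"
      by (metis section_decomposition)
    from eq have "\<alpha> a = \<alpha> b" "lam a + \<beta> u = lam b + \<beta> v"
      by (simp_all add: x y coordinate_map_coordinates section_decomposition_eq_iff)
    then show "x = y"
      using bij_is_inj[OF assms(1)] bij_is_inj[OF assms(2)] by (simp add: x y inj_eq)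
  qed
  show "surj (coordinate_map \<alpha> \<beta> lam)"
  proof -
    have "y \<in> range (coordinate_map \<alpha> \<beta> lam)" for y
    proof -
      obtain a u where y: "y = s a + i u"
        by (rule section_decomposition)
      let ?a = "inv \<alpha> a"
      have "coordinate_map \<alpha> \<beta> lam (s ?a + i (inv \<beta> (u - lam ?a))) = y"
        using bij_is_surj[OF assms(1)] bij_is_surj[OF assms(2)]
        by (simp add: y coordinate_map_coordinates surj_f_inv_f)
      then show ?thesis by (metis rangeI)
    qed
    then show ?thesis by blast
  qed
qed

lemma coordinate_map_i:
  assumes "Vector_Spaces.linear sA sA \<alpha>" "Vector_Spaces.linear sA sM lam"
  shows "coordinate_map \<alpha> \<beta> lam (i u) = i (\<beta> u)"
proof -
  interpret \<alpha>: Vector_Spaces.linear sA sA \<alpha> by fact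
  interpret lam: Vector_Spaces.linear sA sM lam by fact
  show ?thesis
    using coordinate_map_coordinates[of \<alpha> \<beta> lam 0 u] by simp
qed

lemma p_coordinate_map_s:
  assumes "Vector_Spaces.linear sM sM \<beta>"
  shows "p (coordinate_map \<alpha> \<beta> lam (s a)) = \<alpha> a"
proof -
  interpret \<beta>: Vector_Spaces.linear sM sM \<beta> by fact
  show ?thesis
    using coordinate_map_coordinates[of \<alpha> \<beta> lam a 0] by (simp add: p.add)
qed

lemma coordinate_map_multiplicative_iff:
  assumes \<alpha>_mult: "\<And>a b. \<alpha> (mulA a b) = mulA (\<alpha> a) (\<alpha> b)"
    and "Vector_Spaces.linear sA sA \<alpha>" "Vector_Spaces.linear sM sM \<beta>"
    and "Vector_Spaces.linear sA sM lam"
  shows "(\<forall>x y. coordinate_map \<alpha> \<beta> lam (mulE x y) =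
                 mulE (coordinate_map \<alpha> \<beta> lam x) (coordinate_map \<alpha> \<beta> lam y)) \<longleftrightarrow>
         (\<forall>a u. \<beta> (l a u) = l (\<alpha> a) (\<beta> u) \<and> \<beta> (r u a) = r (\<beta> u) (\<alpha> a)) \<and>
         (\<forall>a b. \<beta> (\<chi> a b) - \<chi> (\<alpha> a) (\<alpha> b) =
                l (\<alpha> a) (lam b) + r (lam a) (\<alpha> b) - lam (mulA a b))"
    (is "?mult \<longleftrightarrow> ?compatible \<and> ?cocycle")
proof -
  interpret \<alpha>: Vector_Spaces.linear sA sA \<alpha> by fact
  interpret \<beta>: Vector_Spaces.linear sM sM \<beta> by fact
  interpret lam: Vector_Spaces.linear sA sM lam by fact
  note bilin_simps [simp] =
    bilin_zero_left[OF bilin_mulA] bilin_zero_right[OF bilin_mulA]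
    bilin_zero_left[OF bilin_l] bilin_zero_right[OF bilin_l]
    bilin_zero_left[OF bilin_r] bilin_zero_right[OF bilin_r]
    bilin_add_right[OF bilin_l] bilin_add_left[OF bilin_r]
  let ?\<phi> = "coordinate_map \<alpha> \<beta> lam"
  have coordinates: "?\<phi> (mulE (s a + i u) (s b + i v)) = mulE (?\<phi> (s a + i u)) (?\<phi> (s b + i v))
      \<longleftrightarrow> lam (mulA a b) + \<beta> (\<chi> a b + l a v + r u b) =
          \<chi> (\<alpha> a) (\<alpha> b) + l (\<alpha> a) (lam b + \<beta> v) + r (lam a + \<beta> u) (\<alpha> b)" for a u b v
    by (simp add: mulE_coordinates coordinate_map_coordinates section_decomposition_eq_iff \<alpha>_mult
        inj_eq[OF inj_i])
  show ?thesis
  proof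
    assume ?mult
    then have *: "lam (mulA a b) + \<beta> (\<chi> a b + l a v + r u b) =
          \<chi> (\<alpha> a) (\<alpha> b) + l (\<alpha> a) (lam b + \<beta> v) + r (lam a + \<beta> u) (\<alpha> b)" for a u b v
      using coordinates by blast
    have ?compatible
    proof (intro allI conjI)
      fix a u
      show "\<beta> (l a u) = l (\<alpha> a) (\<beta> u)"
        using *[where u = 0 and b = 0 and v = u] by simp
      show "\<beta> (r u a) = r (\<beta> u) (\<alpha> a)"
        using *[where a = 0 and v = 0 and b = a] by simp
    qed
    moreover have ?cocycle
      using *[where u = 0 and v = 0] by (simp add: algebra_simps)
    ultimately show "?compatible \<and> ?cocycle" ..
  next
    assume "?compatible \<and> ?cocycle"
    then have "lam (mulA a b) + \<beta> (\<chi> a b + l a v + r u b) =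
          \<chi> (\<alpha> a) (\<alpha> b) + l (\<alpha> a) (lam b + \<beta> v) + r (lam a + \<beta> u) (\<alpha> b)" for a u b v
      by (simp add: \<beta>.add algebra_simps)
    then show ?mult
      using coordinates by (metis section_decomposition)
  qed
qed

lemma coordinate_map_commutes_iff:
  assumes \<alpha>_N: "\<And>a. \<alpha> (N a) = N (\<alpha> a)" and \<beta>_NM: "\<And>u. \<beta> (NM u) = NM (\<beta> u)"
    and "Vector_Spaces.linear sM sM \<beta>" "Vector_Spaces.linear sA sM lam"
  shows "(\<forall>x. coordinate_map \<alpha> \<beta> lam (NE x) = NE (coordinate_map \<alpha> \<beta> lam x)) \<longleftrightarrow>
         (\<forall>a. \<beta> (F a) - F (\<alpha> a) = NM (lam a) - lam (N a))"
proof -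
  interpret \<beta>: Vector_Spaces.linear sM sM \<beta> by fact
  interpret lam: Vector_Spaces.linear sA sM lam by fact
  let ?\<phi> = "coordinate_map \<alpha> \<beta> lam"
  have coordinates: "?\<phi> (NE (s a + i u)) = NE (?\<phi> (s a + i u))
      \<longleftrightarrow> lam (N a) + \<beta> (F a + NM u) = F (\<alpha> a) + NM (lam a + \<beta> u)" for a u
    by (simp add: NE_coordinates coordinate_map_coordinates section_decomposition_eq_iff \<alpha>_N
        inj_eq[OF inj_i])
  show ?thesis
  proof
    assume "\<forall>x. ?\<phi> (NE x) = NE (?\<phi> x)"
    then show "\<forall>a. \<beta> (F a) - F (\<alpha> a) = NM (lam a) - lam (N a)"
      using coordinates[where u = 0] by (simp add: algebra_simps)
  next
    assume "\<forall>a. \<beta> (F a) - F (\<alpha> a) = NM (lam a) - lam (N a)"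
    then have "lam (N a) + \<beta> (F a + NM u) = F (\<alpha> a) + NM (lam a + \<beta> u)" for a u
      by (simp add: \<beta>.add NM.add \<beta>_NM algebra_simps)
    then show "\<forall>x. ?\<phi> (NE x) = NE (?\<phi> x)"
      using coordinates by (metis section_decomposition)
  qed
qed

lemma inducing_map_is_coordinate_map:
  assumes "Vector_Spaces.linear sE sE \<phi>" "Vector_Spaces.linear sA sA \<alpha>"
    and \<phi>_i: "\<And>u. \<phi> (i u) = i (\<beta> u)" and p_\<phi>_s: "\<And>a. p (\<phi> (s a)) = \<alpha> a"
  obtains lam where "Vector_Spaces.linear sA sM lam" "\<phi> = coordinate_map \<alpha> \<beta> lam"
proof
  interpret \<phi>: Vector_Spaces.linear sE sE \<phi> by fact
  interpret \<alpha>: Vector_Spaces.linear sA sA \<alpha> by fact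
  define lam where "lam a = inv i (\<phi> (s a) - s (\<alpha> a))" for a
  have i_lam: "i (lam a) = \<phi> (s a) - s (\<alpha> a)" for a
  proof -
    have "\<phi> (s a) - s (\<alpha> a) \<in> range i"
      using range_i by (simp add: p.diff p_\<phi>_s)
    then show ?thesis
      by (simp add: lam_def f_inv_into_f)
  qed
  have "lam (a + b) = lam a + lam b" for a b
  proof -
    have "i (lam (a + b)) = (\<phi> (s a) - s (\<alpha> a)) + (\<phi> (s b) - s (\<alpha> b))"
      by (simp add: i_lam \<phi>.add s.add \<alpha>.add)
    then show ?thesis
      by (simp add: i_lam inj_eq[OF inj_i, symmetric] i.add)
  qed
  moreover have "lam (sA c a) = sM c (lam a)" for c a
    using i_lam[of "sA c a"] i_lam[of a]
    by (simp add: inj_eq[OF inj_i, symmetric] i.scale \<phi>.scale s.scale \<alpha>.scale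
        s.vs2.scale_right_diff_distrib)
  ultimately show "Vector_Spaces.linear sA sM lam"
    by (simp add: Vector_Spaces.linear_iff s.vs1.vector_space_axioms i.vs1.vector_space_axioms)
  show "\<phi> = coordinate_map \<alpha> \<beta> lam"
  proof
    fix x
    obtain a u where x: "x = s a + i u"
      by (rule section_decomposition)
    show "\<phi> x = coordinate_map \<alpha> \<beta> lam x"
      using i_lam[of a] by (simp add: x coordinate_map_coordinates \<phi>.add \<phi>_i i.add)
  qed
qed

lemma inducible_iff_coordinate_map_aut:
  assumes "Vector_Spaces.linear sA sA \<alpha>" "Vector_Spaces.linear sM sM \<beta>"
  shows "inducible sE mulE NE i p s \<beta> \<alpha> \<longleftrightarrow>
    (\<exists>lam. Vector_Spaces.linear sA sM lam \<and> nij_alg_aut sE mulE NE (coordinate_map \<alpha> \<beta> lam))"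
proof
  assume "inducible sE mulE NE i p s \<beta> \<alpha>"
  then obtain \<phi> where aut: "nij_alg_aut sE mulE NE \<phi>"
    and "\<And>u. \<phi> (i u) = i (\<beta> u)" "\<And>a. p (\<phi> (s a)) = \<alpha> a"
    unfolding inducible_def by blast
  moreover from aut have "Vector_Spaces.linear sE sE \<phi>"
    by (simp add: nij_alg_aut_def nij_alg_hom_def)
  ultimately show "\<exists>lam. Vector_Spaces.linear sA sM lam \<and> nij_alg_aut sE mulE NE (coordinate_map \<alpha> \<beta> lam)"
    using inducing_map_is_coordinate_map[OF _ assms(1)] by metis
next
  assume "\<exists>lam. Vector_Spaces.linear sA sM lam \<and> nij_alg_aut sE mulE NE (coordinate_map \<alpha> \<beta> lam)"
  then show "inducible sE mulE NE i p s \<beta> \<alpha>"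
    unfolding inducible_def
    using coordinate_map_i[OF assms(1)] p_coordinate_map_s[OF assms(2)] by blast
qed

lemma coordinate_map_aut_iff:
  assumes \<alpha>: "nij_alg_aut sA mulA N \<alpha>" and \<beta>: "nij_mod_aut sM NM \<beta>"
    and lam: "Vector_Spaces.linear sA sM lam"
  shows "nij_alg_aut sE mulE NE (coordinate_map \<alpha> \<beta> lam) \<longleftrightarrow>
    (\<forall>a u. \<beta> (l a u) = l (\<alpha> a) (\<beta> u) \<and> \<beta> (r u a) = r (\<beta> u) (\<alpha> a)) \<and>
    (\<forall>a b. \<beta> (\<chi> a b) - \<chi> (\<alpha> a) (\<alpha> b) =
           l (\<alpha> a) (lam b) + r (lam a) (\<alpha> b) - lam (mulA a b)) \<and>
    (\<forall>a. \<beta> (F a) - F (\<alpha> a) = NM (lam a) - lam (N a))"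
proof -
  have "Vector_Spaces.linear sA sA \<alpha>" "bij \<alpha>" "\<And>a b. \<alpha> (mulA a b) = mulA (\<alpha> a) (\<alpha> b)"
    "\<And>a. \<alpha> (N a) = N (\<alpha> a)"
    using \<alpha> by (simp_all add: nij_alg_aut_def nij_alg_hom_def)
  moreover have "Vector_Spaces.linear sM sM \<beta>" "bij \<beta>" "\<And>u. \<beta> (NM u) = NM (\<beta> u)"
    using \<beta> by (simp_all add: nij_mod_aut_def)
  ultimately show ?thesis
    unfolding nij_alg_aut_def nij_alg_hom_def
    by (simp add: lam coordinate_map_linear coordinate_map_bij coordinate_map_multiplicative_iff
        coordinate_map_commutes_iff)
qed

end

theorem proposition5p1:
  fixes sA :: "'k::field_char_0 \<Rightarrow> 'a::ab_group_add \<Rightarrow> 'a"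
    and mulA :: "'a \<Rightarrow> 'a \<Rightarrow> 'a" and N :: "'a \<Rightarrow> 'a"
    and sM :: "'k \<Rightarrow> 'm::ab_group_add \<Rightarrow> 'm"
    and l :: "'a \<Rightarrow> 'm \<Rightarrow> 'm" and r :: "'m \<Rightarrow> 'a \<Rightarrow> 'm" and NM :: "'m \<Rightarrow> 'm"
    and sE :: "'k \<Rightarrow> 'e::ab_group_add \<Rightarrow> 'e"
    and mulE :: "'e \<Rightarrow> 'e \<Rightarrow> 'e" and NE :: "'e \<Rightarrow> 'e"
    and i :: "'m \<Rightarrow> 'e" and p :: "'e \<Rightarrow> 'a" and s :: "'a \<Rightarrow> 'e"
    and \<chi> :: "'a \<Rightarrow> 'a \<Rightarrow> 'm" and F :: "'a \<Rightarrow> 'm"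
    and \<beta> :: "'m \<Rightarrow> 'm" and \<alpha> :: "'a \<Rightarrow> 'a"
  assumes bimod: "nijenhuis_bimodule sA mulA N sM l r NM"
    and ext: "abelian_extension sA mulA N sM NM sE mulE NE i p"
    and induced_l: "\<forall>a u. i (l a u) = mulE (s a) (i u)"
    and induced_r: "\<forall>a u. i (r u a) = mulE (i u) (s a)"
    and sec: "linear_section sA sE p s"
    and chi_def: "\<forall>a b. i (\<chi> a b) = mulE (s a) (s b) - s (mulA a b)"
    and F_def: "\<forall>a. i (F a) = NE (s a) - s (N a)"
    and beta_aut: "nij_mod_aut sM NM \<beta>"
    and alpha_aut: "nij_alg_aut sA mulA N \<alpha>"
  shows "inducible sE mulE NE i p s \<beta> \<alpha> \<longleftrightarrow>
     ((\<forall>a u. \<beta> (l a u) = l (\<alpha> a) (\<beta> u) \<and> \<beta> (r u a) = r (\<beta> u) (\<alpha> a)) \<and>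
      (\<exists>lam. Vector_Spaces.linear sA sM lam \<and>
         (\<forall>a b. \<beta> (\<chi> a b) - \<chi> (\<alpha> a) (\<alpha> b) =
                 l (\<alpha> a) (lam b) + r (lam a) (\<alpha> b) - lam (mulA a b)) \<and>
         (\<forall>a. \<beta> (F a) - F (\<alpha> a) = NM (lam a) - lam (N a))))"
proof -
  interpret abelian_extension_with_section sA mulA N sM l r NM sE mulE NE i p s \<chi> F
    using bimod ext induced_l induced_r sec chi_def F_def by unfold_locales blast+
  have "Vector_Spaces.linear sA sA \<alpha>" "Vector_Spaces.linear sM sM \<beta>"
    using alpha_aut beta_aut by (simp_all add: nij_alg_aut_def nij_alg_hom_def nij_mod_aut_def)
  then have "inducible sE mulE NE i p s \<beta> \<alpha> \<longleftrightarrow>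
      (\<exists>lam. Vector_Spaces.linear sA sM lam \<and> nij_alg_aut sE mulE NE (coordinate_map \<alpha> \<beta> lam))"
    by (rule inducible_iff_coordinate_map_aut)
  then show ?thesis
    using coordinate_map_aut_iff[OF alpha_aut beta_aut] by blast
qed

end
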